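(* Let $A_4$ be the Cayley-Dickson algebra of sedenions with canonical basis $e_0,\dots,e_{15}$. Then: (i) the imaginary units lying on no defective triple are exactly $e_1,e_2,e_4,e_8,e_{15}$, and each of the remaining ten imaginary units $e_3,e_5,e_6,e_7,e_9,e_{10},e_{11},e_{12},e_{13},e_{14}$ lies on exactly three defective triples (and four ordinary ones); (ii) the incidence structure $\mathcal{D}$ whose points are these ten units and whose lines are the ten defective triples is isomorphic to the Desargues configuration $G_2(5)$; (iii) there is a bijection $\varphi$ from the set of geometric hyperplanes of $\mathcal{D}$ onto $\{e_1,\dots,e_{15}\}$ mapping the set of lines of the Veldkamp space $\mathcal{V}(\mathcal{D})$ bijectively onto the set of distinguished triples of $A_4$ (so $\mathcal{V}(\mathcal{D})\cong\mathrm{PG}(3,2)$), such that a geometric hyperplane has $4$ points (a point together with the three points not collinear with it) if and only if its image lies on some defective triple, and has $6$ points (a copy of the Pasch configuration $G_2(4)$) if and only if its image is one of $e_1,e_2,e_4,e_8,e_{15}$.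
   Context: Cayley-Dickson algebras: $A_0=\mathbb{R}$ with trivial conjugation; $A_{N+1}$ is the set of ordered pairs $(x,y)$ with $x,y\in A_N$, with conjugation $(x,y)^*=(x^*,-y)$ and multiplication $(x,y)(X,Y)=(xX-Yy^*,\,x^*Y+Xy)$. The canonical basis of $A_0$ is $e_0=1$; if $e_0,\dots,e_{2^N-1}$ is the canonical basis of $A_N$, the canonical basis of $A_{N+1}$ is $e_a=(e_a,0)$ and $e_{2^N+a}=(0,e_a)$ for $0\le a\le 2^N-1$. The imaginary units of $A_N$ are $e_1,\dots,e_{2^N-1}$. A distinguished triple is a set $\{e_a,e_b,e_c\}$ with $1\le a<b<c\le 2^N-1$ and $e_ae_b=\pm e_c$; it is called ordinary if $a+b=c$ and defective if $a+b\neq c$. The combinatorial Grassmannian $G_2(n)$ is the point-line incidence structure whose points are the $2$-element subsets of $\{1,\dots,n\}$, whose lines are the $3$-element subsets, incidence being inclusion ($G_2(4)$ is the Pasch configuration, $G_2(5)$ the Desargues configuration). A geometric hyperplane of a point-line incidence structure is a proper subset $H$ of the point set such that every line is either contained in $H$ or meets $H$ in exactly one point. The Veldkamp space $\mathcal{V}(\mathcal{C})$ has as points the geometric hyperplanes of $\mathcal{C}$; for distinct hyperplanes $H',H''$ the Veldkamp line $H'H''$ is the set of all geometric hyperplanes $H$ with $H=H'$, $H=H''$, or $H'\cap H''=H'\cap H=H''\cap H$. *)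

theory Defs
  imports Complex_Main
begin

text \<open>An element of A_N is represented by its coordinate function
  nat => real with respect to the canonical basis, supported on indices < 2^N.
  The pair (x,y) of A_(N+1) has coordinates of x at indices < 2^N and those of y
  at indices 2^N + i.\<close>

definition cd_lo :: "nat \<Rightarrow> (nat \<Rightarrow> real) \<Rightarrow> (nat \<Rightarrow> real)" where
  "cd_lo N x = (\<lambda>i. if i < 2^N then x i else 0)"

definition cd_hi :: "nat \<Rightarrow> (nat \<Rightarrow> real) \<Rightarrow> (nat \<Rightarrow> real)" where
  "cd_hi N x = (\<lambda>i. if i < 2^N then x (2^N + i) else 0)"

definition cd_pair :: "nat \<Rightarrow> (nat \<Rightarrow> real) \<Rightarrow> (nat \<Rightarrow> real) \<Rightarrow> (nat \<Rightarrow> real)" where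
  "cd_pair N a b = (\<lambda>i. if i < 2^N then a i else if i < 2 * 2^N then b (i - 2^N) else 0)"

fun cd_conj :: "nat \<Rightarrow> (nat \<Rightarrow> real) \<Rightarrow> (nat \<Rightarrow> real)" where
  "cd_conj 0 x = (\<lambda>i. if i = 0 then x 0 else 0)"
| "cd_conj (Suc N) x = cd_pair N (cd_conj N (cd_lo N x)) (\<lambda>i. - cd_hi N x i)"

text \<open>(x,y)(X,Y) = (xX - Y y^*, x^* Y + X y)\<close>
fun cd_mult :: "nat \<Rightarrow> (nat \<Rightarrow> real) \<Rightarrow> (nat \<Rightarrow> real) \<Rightarrow> (nat \<Rightarrow> real)" where
  "cd_mult 0 p q = (\<lambda>i. if i = 0 then p 0 * q 0 else 0)"
| "cd_mult (Suc N) p q =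
     (let x = cd_lo N p; y = cd_hi N p; X = cd_lo N q; Y = cd_hi N q
      in cd_pair N (\<lambda>i. cd_mult N x X i - cd_mult N Y (cd_conj N y) i)
                   (\<lambda>i. cd_mult N (cd_conj N x) Y i + cd_mult N X y i))"

definition cd_basis :: "nat \<Rightarrow> (nat \<Rightarrow> real)" where
  "cd_basis a = (\<lambda>i. if i = a then 1 else 0)"

text \<open>Imaginary units are identified with their indices 1 .. 2^N - 1; a triple
  {e_a, e_b, e_c} is identified with the index set {a, b, c}.\<close>

definition dist_triple :: "nat \<Rightarrow> nat set \<Rightarrow> bool" where
  "dist_triple N t \<longleftrightarrow> (\<exists>a b c. t = {a, b, c} \<and> 1 \<le> a \<and> a < b \<and> b < c \<and> c \<le> 2^N - 1 \<and>
      (cd_mult N (cd_basis a) (cd_basis b) = cd_basis c \<or>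
       cd_mult N (cd_basis a) (cd_basis b) = (\<lambda>i. - cd_basis c i)))"

definition ordinary_triple :: "nat \<Rightarrow> nat set \<Rightarrow> bool" where
  "ordinary_triple N t \<longleftrightarrow> (\<exists>a b c. t = {a, b, c} \<and> 1 \<le> a \<and> a < b \<and> b < c \<and> c \<le> 2^N - 1 \<and>
      (cd_mult N (cd_basis a) (cd_basis b) = cd_basis c \<or>
       cd_mult N (cd_basis a) (cd_basis b) = (\<lambda>i. - cd_basis c i)) \<and> a + b = c)"

definition defective_triple :: "nat \<Rightarrow> nat set \<Rightarrow> bool" where
  "defective_triple N t \<longleftrightarrow> (\<exists>a b c. t = {a, b, c} \<and> 1 \<le> a \<and> a < b \<and> b < c \<and> c \<le> 2^N - 1 \<and>
      (cd_mult N (cd_basis a) (cd_basis b) = cd_basis c \<or>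
       cd_mult N (cd_basis a) (cd_basis b) = (\<lambda>i. - cd_basis c i)) \<and> a + b \<noteq> c)"

definition inc_iso ::
  "'p set \<Rightarrow> 'l set \<Rightarrow> ('p \<Rightarrow> 'l \<Rightarrow> bool) \<Rightarrow> 'q set \<Rightarrow> 'm set \<Rightarrow> ('q \<Rightarrow> 'm \<Rightarrow> bool) \<Rightarrow> bool" where
  "inc_iso P L I Q M J \<longleftrightarrow> (\<exists>f g. bij_betw f P Q \<and> bij_betw g L M \<and>
      (\<forall>p\<in>P. \<forall>l\<in>L. I p l \<longleftrightarrow> J (f p) (g l)))"

definition G2_points :: "nat \<Rightarrow> nat set set" where
  "G2_points n = {s. s \<subseteq> {1..n} \<and> card s = 2}"
definition G2_lines :: "nat \<Rightarrow> nat set set" where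
  "G2_lines n = {s. s \<subseteq> {1..n} \<and> card s = 3}"

definition geom_hyperplane :: "'p set \<Rightarrow> 'p set set \<Rightarrow> 'p set \<Rightarrow> bool" where
  "geom_hyperplane P L H \<longleftrightarrow> H \<subset> P \<and>
     (\<forall>l\<in>L. l \<subseteq> H \<or> card (l \<inter> H) = 1)"

definition hyperplanes :: "'p set \<Rightarrow> 'p set set \<Rightarrow> 'p set set" where
  "hyperplanes P L = {H. geom_hyperplane P L H}"

definition veldkamp_line :: "'p set \<Rightarrow> 'p set set \<Rightarrow> 'p set \<Rightarrow> 'p set \<Rightarrow> 'p set set" where
  "veldkamp_line P L H1 H2 = {H. geom_hyperplane P L H \<and>
     (H = H1 \<or> H = H2 \<or> (H1 \<inter> H2 = H1 \<inter> H \<and> H1 \<inter> H = H2 \<inter> H))}"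

definition veldkamp_lines :: "'p set \<Rightarrow> 'p set set \<Rightarrow> 'p set set set" where
  "veldkamp_lines P L = {veldkamp_line P L H1 H2 | H1 H2.
     geom_hyperplane P L H1 \<and> geom_hyperplane P L H2 \<and> H1 \<noteq> H2}"

definition collinear :: "'p set set \<Rightarrow> 'p \<Rightarrow> 'p \<Rightarrow> bool" where
  "collinear L p q \<longleftrightarrow> (\<exists>l\<in>L. p \<in> l \<and> q \<in> l)"

definition sed_def_triples :: "nat set set" where
  "sed_def_triples = {t. defective_triple 4 t}"

definition D_points :: "nat set" where
  "D_points = {a \<in> {1..15}. \<exists>t. defective_triple 4 t \<and> a \<in> t}"

end

theory Submission
  imports Defs "HOL-Combinatorics.Transposition"
begin

text \<open>In A_N the product of two basis elements is e_a e_b = \<plusminus>e_(a XOR b), so the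
  distinguished triples are exactly the sets {a, b, a XOR b} of distinct nonzero indices.
  In a structure with three points per line the complement of a geometric hyperplane meets every
  line in an even number of points; if moreover no hyperplane contains another (as in D), the
  Veldkamp line through A and B consists of A, B and the hyperplane whose complement is the
  symmetric difference of the complements of A and B.  Hence labelling a hyperplane of D by the
  XOR of the units of D outside it is additive along Veldkamp lines; being a bijection onto the
  fifteen imaginary units, it carries Veldkamp lines onto distinguished triples.  The remaining
  statements are finite checks on the explicitly computed ten defective triples and fifteen
  hyperplanes of D.\<close>

unbundle bit_operations_syntax

section \<open>Products of basis elements\<close>

lemma xor_less_exp:
  fixes a b :: nat
  shows "a < 2^N \<Longrightarrow> b < 2^N \<Longrightarrow> a XOR b < 2^N"
  by (metis take_bit_nat_eq_self_iff take_bit_xor)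

lemma exp_add_eq_xor:
  fixes x :: nat
  assumes "x < 2^N"
  shows "2^N + x = 2^N XOR x"
proof (rule disjunctive_add_eq_xor)
  have "\<not> bit x N"
    using assms by (metis bit_take_bit_iff less_irrefl take_bit_nat_eq_self_iff)
  then show "2^N AND x = 0" by (simp add: and_exp_eq_0_iff_not_bit and.commute)
qed

lemma xor_exp_add:
  fixes a b :: nat
  assumes "a < 2^N" "b < 2^N"
  shows "(2^N + a) XOR b = 2^N + (a XOR b)"
    and "a XOR (2^N + b) = 2^N + (a XOR b)"
    and "(2^N + a) XOR (2^N + b) = a XOR b"
proof -
  have ab: "2^N + (a XOR b) = 2^N XOR (a XOR b)"
    using assms by (simp add: exp_add_eq_xor xor_less_exp)
  show "(2^N + a) XOR b = 2^N + (a XOR b)"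
    unfolding ab exp_add_eq_xor[OF assms(1)] by (rule xor.assoc)
  then show "a XOR (2^N + b) = 2^N + (a XOR b)"
    unfolding exp_add_eq_xor[OF assms(1)] exp_add_eq_xor[OF assms(2)] ab
    by (metis xor.assoc xor.commute)
  show "(2^N + a) XOR (2^N + b) = a XOR b"
    unfolding exp_add_eq_xor[OF assms(1)] exp_add_eq_xor[OF assms(2)]
    by (metis xor.assoc xor.commute xor.left_neutral xor_self_eq)
qed

lemma xor_cancel:
  fixes x y :: nat
  shows "x XOR (x XOR y) = y" and "(x XOR y) XOR y = x"
  by (metis xor.assoc xor.left_neutral xor_self_eq, metis xor.assoc xor.right_neutral xor_self_eq)

definition scaled_basis :: "real \<Rightarrow> nat \<Rightarrow> nat \<Rightarrow> real" where
  "scaled_basis s k = (\<lambda>i. if i = k then s else 0)"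

definition conj_sign :: "nat \<Rightarrow> real" where
  "conj_sign a = (if a = 0 then 1 else -1)"

fun cd_sign :: "nat \<Rightarrow> nat \<Rightarrow> nat \<Rightarrow> real" where
  "cd_sign 0 a b = 1"
| "cd_sign (Suc N) a b =
     (if a < 2^N \<and> b < 2^N then cd_sign N a b
      else if a < 2^N then conj_sign a * cd_sign N a (b - 2^N)
      else if b < 2^N then cd_sign N b (a - 2^N)
      else - conj_sign (a - 2^N) * cd_sign N (b - 2^N) (a - 2^N))"

lemma cd_sign_cases: "cd_sign N a b = 1 \<or> cd_sign N a b = -1"
  by (induction N a b rule: cd_sign.induct) (auto simp: conj_sign_def)

lemma cd_lo_zero: "cd_lo N (\<lambda>_. 0) = (\<lambda>_. 0)"
  and cd_hi_zero: "cd_hi N (\<lambda>_. 0) = (\<lambda>_. 0)"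
  by (auto simp: cd_lo_def cd_hi_def)

lemma cd_conj_zero: "cd_conj N (\<lambda>_. 0) = (\<lambda>_. 0)"
  by (induction N) (auto simp: cd_pair_def cd_lo_zero cd_hi_zero)

lemma cd_mult_zero: "cd_mult N (\<lambda>_. 0) q = (\<lambda>_. 0) \<and> cd_mult N p (\<lambda>_. 0) = (\<lambda>_. 0)"
proof (induction N arbitrary: p q)
  case (Suc N)
  then show ?case
    by (simp add: Let_def cd_pair_def cd_lo_zero cd_hi_zero cd_conj_zero fun_eq_iff)
qed (simp add: fun_eq_iff)

lemma cd_lo_hi_scaled_basis:
  assumes "k < 2^N"
  shows "cd_lo N (scaled_basis s k) = scaled_basis s k"
    and "cd_hi N (scaled_basis s k) = (\<lambda>_. 0)"
    and "cd_lo N (scaled_basis s (2^N + k)) = (\<lambda>_. 0)"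
    and "cd_hi N (scaled_basis s (2^N + k)) = scaled_basis s k"
  using assms by (auto simp: cd_lo_def cd_hi_def scaled_basis_def fun_eq_iff)

lemma scaled_basis_uminus: "(\<lambda>i. - scaled_basis s k i) = scaled_basis (- s) k"
  by (simp add: scaled_basis_def fun_eq_iff)

lemma cd_pair_scaled_basis:
  "k < 2^N \<Longrightarrow> cd_pair N (scaled_basis s k) (\<lambda>_. 0) = scaled_basis s k"
  "k < 2^N \<Longrightarrow> cd_pair N (\<lambda>_. 0) (scaled_basis s k) = scaled_basis s (2^N + k)"
  by (auto simp: cd_pair_def scaled_basis_def fun_eq_iff)

lemma split_below_double_exp:
  fixes a :: nat
  assumes "a < 2 * 2^N"
  obtains "a < 2^N" | a' where "a = 2^N + a'" "a' < 2^N"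
  using assms by (metis add_diff_inverse_nat add_less_imp_less_left mult_2)

lemma cd_conj_scaled_basis:
  "a < 2^N \<Longrightarrow> cd_conj N (scaled_basis s a) = scaled_basis (s * conj_sign a) a"
proof (induction N arbitrary: s a)
  case 0 then show ?case by (auto simp: scaled_basis_def conj_sign_def)
next
  case (Suc N)
  from Suc.prems have "a < 2 * 2^N" by simp
  then show ?case
  proof (cases rule: split_below_double_exp)
    case 1
    then show ?thesis using Suc.IH
      by (simp add: cd_lo_hi_scaled_basis cd_pair_scaled_basis)
  next
    case (2 a')
    have "cd_conj (Suc N) (scaled_basis s a) = cd_pair N (\<lambda>_. 0) (scaled_basis (-s) a')"
      using 2 by (simp add: cd_lo_hi_scaled_basis cd_conj_zero)
                 (simp add: scaled_basis_def fun_eq_iff cd_pair_def)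
    then show ?thesis using 2 by (simp add: cd_pair_scaled_basis conj_sign_def)
  qed
qed

lemma cd_mult_scaled_basis:
  "a < 2^N \<Longrightarrow> b < 2^N \<Longrightarrow>
   cd_mult N (scaled_basis s a) (scaled_basis t b) = scaled_basis (s * t * cd_sign N a b) (a XOR b)"
proof (induction N arbitrary: s t a b)
  case 0 then show ?case by (auto simp: scaled_basis_def fun_eq_iff)
next
  case (Suc N)
  note components = cd_lo_hi_scaled_basis cd_mult_zero cd_conj_zero
    cd_conj_scaled_basis Let_def
  note normalise = cd_pair_scaled_basis xor_less_exp scaled_basis_uminus mult_ac
  from Suc.prems have a: "a < 2 * 2^N" and b: "b < 2 * 2^N" by simp_all
  show ?case
  proof (cases rule: split_below_double_exp[OF a])
    case 1
    show ?thesis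
    proof (cases rule: split_below_double_exp[OF b])
      case 1
      with \<open>a < 2^N\<close> show ?thesis by (simp add: components Suc.IH normalise)
    next
      case (2 b')
      with \<open>a < 2^N\<close> show ?thesis by (simp add: components Suc.IH normalise xor_exp_add)
    qed
  next
    case (2 a')
    show ?thesis
    proof (cases rule: split_below_double_exp[OF b])
      case 1
      with 2 show ?thesis by (simp add: components Suc.IH normalise xor_exp_add xor.commute)
    next
      case (2 b')
      with \<open>a = 2^N + a'\<close> \<open>a' < 2^N\<close> show ?thesis
        by (simp add: components Suc.IH normalise xor_exp_add xor.commute)
    qed
  qed
qed

lemma cd_basis_eq_scaled_basis: "cd_basis a = scaled_basis 1 a"
  by (simp add: cd_basis_def scaled_basis_def)

lemma scaled_basis_eq_iff: "s \<noteq> 0 \<Longrightarrow> scaled_basis s k = scaled_basis s' k' \<longleftrightarrow> s = s' \<and> k = k'"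
  by (auto simp: scaled_basis_def fun_eq_iff)

lemma cd_mult_basis:
  "a < 2^N \<Longrightarrow> b < 2^N \<Longrightarrow> cd_mult N (cd_basis a) (cd_basis b) = scaled_basis (cd_sign N a b) (a XOR b)"
  by (simp add: cd_basis_eq_scaled_basis cd_mult_scaled_basis)

lemma cd_basis_product_eq_pm_basis_iff:
  assumes "a < 2^N" "b < 2^N"
  shows "(cd_mult N (cd_basis a) (cd_basis b) = cd_basis c \<or>
          cd_mult N (cd_basis a) (cd_basis b) = (\<lambda>i. - cd_basis c i)) \<longleftrightarrow> c = a XOR b"
  unfolding cd_mult_basis[OF assms]
  using cd_sign_cases[of N a b]
  by (auto simp: cd_basis_eq_scaled_basis scaled_basis_uminus scaled_basis_eq_iff)

lemma cd_basis_product_eq_pm_basis_ordered_iff: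
  assumes "a < b" "b < c" "c \<le> 2^N - 1"
  shows "(cd_mult N (cd_basis a) (cd_basis b) = cd_basis c \<or>
          cd_mult N (cd_basis a) (cd_basis b) = (\<lambda>i. - cd_basis c i)) \<longleftrightarrow> c = a XOR b"
proof -
  have "c < 2^N" using assms(3) by (metis diff_less le_less_trans pos2 zero_less_one zero_less_power)
  with assms show ?thesis by (intro cd_basis_product_eq_pm_basis_iff) auto
qed

lemma cd_triples_eq:
  "{t. \<exists>a b c. t = {a, b, c} \<and> 1 \<le> a \<and> a < b \<and> b < c \<and> c \<le> 2^N - 1 \<and>
      (cd_mult N (cd_basis a) (cd_basis b) = cd_basis c \<or>
       cd_mult N (cd_basis a) (cd_basis b) = (\<lambda>i. - cd_basis c i)) \<and> R a b c}
   = (\<lambda>(a, b). {a, b, a XOR b}) `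
       Set.filter (\<lambda>(a, b). a < b \<and> b < a XOR b \<and> R a b (a XOR b)) ({1..<2^N} \<times> {1..<2^N})"
  (is "?L = ?R")
proof (intro equalityI subsetI)
  fix t assume "t \<in> ?L"
  then obtain a b c where t: "t = {a, b, c}" "1 \<le> a" "a < b" "b < c" "c \<le> 2^N - 1" "R a b c"
    and prod: "cd_mult N (cd_basis a) (cd_basis b) = cd_basis c \<or>
       cd_mult N (cd_basis a) (cd_basis b) = (\<lambda>i. - cd_basis c i)"
    by blast
  with cd_basis_product_eq_pm_basis_ordered_iff have "c = a XOR b" by blast
  with t show "t \<in> ?R" by (auto intro!: image_eqI[where x = "(a, b)"])
next
  fix t assume "t \<in> ?R"
  then obtain a b where t: "t = {a, b, a XOR b}" "1 \<le> a" "a < b" "b < a XOR b" "R a b (a XOR b)"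
    and "a < 2^N" "b < 2^N" by auto
  moreover from \<open>a < 2^N\<close> \<open>b < 2^N\<close> have "a XOR b \<le> 2^N - 1"
    using xor_less_exp by fastforce
  ultimately show "t \<in> ?L"
    using cd_basis_product_eq_pm_basis_ordered_iff[of a b "a XOR b" N] by blast
qed

lemma dist_triple_iff_xor:
  "dist_triple N t \<longleftrightarrow> (\<exists>a\<in>{1..<2^N}. \<exists>b\<in>{1..<2^N}. a \<noteq> b \<and> t = {a, b, a XOR b})"
proof
  assume "dist_triple N t"
  then obtain a b c where t: "t = {a, b, c}" "1 \<le> a" "a < b" "b < c" "c \<le> 2^N - 1"
    and prod: "cd_mult N (cd_basis a) (cd_basis b) = cd_basis c \<or>
       cd_mult N (cd_basis a) (cd_basis b) = (\<lambda>i. - cd_basis c i)"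
    unfolding dist_triple_def by blast
  with cd_basis_product_eq_pm_basis_ordered_iff have "c = a XOR b" by blast
  with t show "\<exists>a\<in>{1..<2^N}. \<exists>b\<in>{1..<2^N}. a \<noteq> b \<and> t = {a, b, a XOR b}"
    by (intro bexI[of _ a] bexI[of _ b]) auto
next
  assume "\<exists>a\<in>{1..<2^N}. \<exists>b\<in>{1..<2^N}. a \<noteq> b \<and> t = {a, b, a XOR b}"
  then obtain a b where ab: "a \<in> {1..<2^N}" "b \<in> {1..<2^N}" "a \<noteq> b" and t: "t = {a, b, a XOR b}"
    by blast
  define c where "c = a XOR b"
  have "c \<noteq> 0" "c \<noteq> a" "c \<noteq> b"
    using ab xor_cancel[of a b] xor_self_eq[of a] xor_self_eq[of b] unfolding c_def
    by (metis xor.right_neutral, fastforce, fastforce)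
  then have c: "c \<in> {1..<2^N}" "c \<noteq> a" "c \<noteq> b"
    using ab xor_less_exp[of a N b] by (auto simp: c_def)
  have xors: "a XOR b = c" "b XOR a = c" "a XOR c = b" "c XOR a = b" "b XOR c = a" "c XOR b = a"
    unfolding c_def by (simp_all add: xor_cancel xor.commute xor.left_commute)
  have ordered: "dist_triple N {x, y, z}"
    if "x < y" "y < z" "x XOR y = z" "{x, y, z} \<subseteq> {1..<2^N}" for x y z
  proof -
    have "z \<le> 2^N - 1" "1 \<le> x" using that by auto
    then show ?thesis
      unfolding dist_triple_def using cd_basis_product_eq_pm_basis_ordered_iff[of x y z N] that(1-3)
      by blast
  qed
  have range: "{a, b, c} \<subseteq> {1..<2^N}" using ab c by auto
  consider "a < b" "b < c" | "a < c" "c < b" | "b < a" "a < c" | "b < c" "c < a"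
    | "c < a" "a < b" | "c < b" "b < a"
    using ab(3) c(2,3) by (metis linorder_neqE_nat)
  then show "dist_triple N t"
    unfolding t c_def[symmetric]
    using ordered[of a b c] ordered[of a c b] ordered[of b a c] ordered[of b c a] ordered[of c a b]
      ordered[of c b a] xors range
    by cases (simp_all add: insert_commute)
qed

section \<open>Incidence structures with three points per line\<close>

lemma three_point_line_condition_iff:
  assumes "x \<noteq> y" "x \<noteq> w" "y \<noteq> w"
  shows "({x, y, w} \<subseteq> H \<or> card ({x, y, w} \<inter> H) = 1) \<longleftrightarrow> (w \<in> H \<longleftrightarrow> (x \<in> H \<longleftrightarrow> y \<in> H))"
  using assms by (cases "x \<in> H"; cases "y \<in> H"; cases "w \<in> H") (auto simp: Int_insert_left)

definition veldkamp_third :: "'p set \<Rightarrow> 'p set \<Rightarrow> 'p set \<Rightarrow> 'p set" where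
  "veldkamp_third P A B = {p \<in> P. p \<in> A \<longleftrightarrow> p \<in> B}"

lemma geom_hyperplane_veldkamp_third:
  assumes lines: "\<forall>l\<in>L. l \<subseteq> P \<and> card l = 3"
    and A: "geom_hyperplane P L A" and B: "geom_hyperplane P L B" and "A \<noteq> B"
  shows "geom_hyperplane P L (veldkamp_third P A B)"
  unfolding geom_hyperplane_def
proof (intro conjI ballI)
  from A B have "A \<subseteq> P" "B \<subseteq> P" by (auto simp: geom_hyperplane_def)
  with \<open>A \<noteq> B\<close> obtain p where "p \<in> P" "p \<in> A \<longleftrightarrow> p \<notin> B" by blast
  then show "veldkamp_third P A B \<subset> P" by (auto simp: veldkamp_third_def)
next
  fix l assume "l \<in> L"
  with lines obtain x y w where l: "l = {x, y, w}" "x \<noteq> y" "x \<noteq> w" "y \<noteq> w" "l \<subseteq> P"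
    by (metis card_3_iff)
  have "w \<in> H \<longleftrightarrow> (x \<in> H \<longleftrightarrow> y \<in> H)" if "geom_hyperplane P L H" for H
    using that \<open>l \<in> L\<close> three_point_line_condition_iff[OF l(2-4), of H] l(1)
    by (auto simp: geom_hyperplane_def)
  with A B l(5) show "l \<subseteq> veldkamp_third P A B \<or> card (l \<inter> veldkamp_third P A B) = 1"
    unfolding l(1) three_point_line_condition_iff[OF l(2-4)] by (auto simp: veldkamp_third_def)
qed

lemma veldkamp_line_eq:
  assumes lines: "\<forall>l\<in>L. l \<subseteq> P \<and> card l = 3"
    and antichain: "\<forall>H\<in>hyperplanes P L. \<forall>H'\<in>hyperplanes P L. H \<subseteq> H' \<longrightarrow> H = H'"
    and A: "geom_hyperplane P L A" and B: "geom_hyperplane P L B" and "A \<noteq> B"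
  shows "veldkamp_line P L A B = {A, B, veldkamp_third P A B}"
proof (intro equalityI subsetI)
  have third: "geom_hyperplane P L (veldkamp_third P A B)"
    using lines A B \<open>A \<noteq> B\<close> by (rule geom_hyperplane_veldkamp_third)
  fix H assume H: "H \<in> veldkamp_line P L A B"
  then have "geom_hyperplane P L H" by (simp add: veldkamp_line_def)
  show "H \<in> {A, B, veldkamp_third P A B}"
  proof (cases "H = A \<or> H = B")
    case False
    with H have "A \<inter> B = A \<inter> H" "A \<inter> H = B \<inter> H" by (auto simp: veldkamp_line_def)
    moreover have "H \<subseteq> P" using \<open>geom_hyperplane P L H\<close> by (auto simp: geom_hyperplane_def)
    ultimately have "H \<subseteq> veldkamp_third P A B" by (auto simp: veldkamp_third_def)
    with antichain third \<open>geom_hyperplane P L H\<close> show ?thesis by (auto simp: hyperplanes_def)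
  qed auto
next
  fix H assume "H \<in> {A, B, veldkamp_third P A B}"
  moreover have "A \<inter> B = A \<inter> veldkamp_third P A B" "A \<inter> veldkamp_third P A B = B \<inter> veldkamp_third P A B"
    using A B by (auto simp: veldkamp_third_def geom_hyperplane_def)
  ultimately show "H \<in> veldkamp_line P L A B"
    using A B geom_hyperplane_veldkamp_third[OF lines A B \<open>A \<noteq> B\<close>]
    by (auto simp: veldkamp_line_def)
qed

lemma bij_betw_veldkamp_lines_dist_triples:
  assumes lines: "\<forall>l\<in>L. l \<subseteq> P \<and> card l = 3"
    and antichain: "\<forall>H\<in>hyperplanes P L. \<forall>H'\<in>hyperplanes P L. H \<subseteq> H' \<longrightarrow> H = H'"
    and bij: "bij_betw \<phi> (hyperplanes P L) {1..<2^N}"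
    and additive: "\<And>A B. A \<in> hyperplanes P L \<Longrightarrow> B \<in> hyperplanes P L \<Longrightarrow>
                     \<phi> (veldkamp_third P A B) = \<phi> A XOR \<phi> B"
  shows "bij_betw (\<lambda>V. \<phi> ` V) (veldkamp_lines P L) {t. dist_triple N t}"
proof -
  let ?Hyp = "hyperplanes P L"
  have image: "\<phi> ` veldkamp_line P L A B = {\<phi> A, \<phi> B, \<phi> A XOR \<phi> B}"
    if "A \<in> ?Hyp" "B \<in> ?Hyp" "A \<noteq> B" for A B
    using veldkamp_line_eq[OF lines antichain _ _ \<open>A \<noteq> B\<close>] additive that
    by (simp add: hyperplanes_def)
  have "veldkamp_lines P L \<subseteq> Pow ?Hyp"
    by (auto simp: veldkamp_lines_def veldkamp_line_def hyperplanes_def)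
  moreover have "inj_on \<phi> ?Hyp" using bij by (rule bij_betw_imp_inj_on)
  ultimately have inj: "inj_on (\<lambda>V. \<phi> ` V) (veldkamp_lines P L)"
    by (meson inj_on_image_Pow inj_on_subset)
  have "(\<lambda>V. \<phi> ` V) ` veldkamp_lines P L = {t. dist_triple N t}"
  proof (intro equalityI subsetI)
    fix t assume "t \<in> (\<lambda>V. \<phi> ` V) ` veldkamp_lines P L"
    then obtain A B where AB: "A \<in> ?Hyp" "B \<in> ?Hyp" "A \<noteq> B" and t: "t = \<phi> ` veldkamp_line P L A B"
      by (auto simp: veldkamp_lines_def hyperplanes_def)
    have "\<phi> A \<in> {1..<2^N}" "\<phi> B \<in> {1..<2^N}" "\<phi> A \<noteq> \<phi> B"
      using AB bij by (auto simp: bij_betw_def inj_on_def)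
    then show "t \<in> {t. dist_triple N t}"
      unfolding t image[OF AB] dist_triple_iff_xor by blast
  next
    fix t assume "t \<in> {t. dist_triple N t}"
    then obtain a b where ab: "a \<in> {1..<2^N}" "b \<in> {1..<2^N}" "a \<noteq> b" and t: "t = {a, b, a XOR b}"
      by (auto simp: dist_triple_iff_xor)
    obtain A B where AB: "A \<in> ?Hyp" "B \<in> ?Hyp" "\<phi> A = a" "\<phi> B = b"
      using bij ab by (metis bij_betw_def imageE)
    with \<open>a \<noteq> b\<close> have "A \<noteq> B" by blast
    with AB have "veldkamp_line P L A B \<in> veldkamp_lines P L"
      by (auto simp: veldkamp_lines_def hyperplanes_def)
    moreover have "t = \<phi> ` veldkamp_line P L A B" using image[OF AB(1,2) \<open>A \<noteq> B\<close>] AB t by simp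
    ultimately show "t \<in> (\<lambda>V. \<phi> ` V) ` veldkamp_lines P L" by blast
  qed
  with inj show ?thesis by (simp add: bij_betw_def)
qed

definition xor_label :: "nat list \<Rightarrow> nat set \<Rightarrow> nat" where
  "xor_label ps H = foldr (XOR) (filter (\<lambda>p. p \<notin> H) ps) 0"

lemma foldr_xor_filter_neq:
  fixes xs :: "nat list"
  shows "foldr (XOR) (filter (\<lambda>x. P x \<noteq> Q x) xs) 0
       = foldr (XOR) (filter P xs) 0 XOR foldr (XOR) (filter Q xs) 0"
proof (induction xs)
  case (Cons x xs)
  then show ?case
    by (cases "P x"; cases "Q x") (simp_all add: xor.assoc xor.left_commute xor_cancel)
qed simp

lemma xor_label_veldkamp_third:
  "xor_label ps (veldkamp_third (set ps) A B) = xor_label ps A XOR xor_label ps B"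
proof -
  have "filter (\<lambda>p. p \<notin> veldkamp_third (set ps) A B) ps = filter (\<lambda>p. (p \<notin> A) \<noteq> (p \<notin> B)) ps"
    by (rule filter_cong) (auto simp: veldkamp_third_def)
  then show ?thesis
    unfolding xor_label_def using foldr_xor_filter_neq[of "\<lambda>p. p \<notin> A" "\<lambda>p. p \<notin> B" ps] by simp
qed

definition grassmannian_labelling :: "'p set \<Rightarrow> 'p set set \<Rightarrow> ('p \<Rightarrow> nat set) \<Rightarrow> nat \<Rightarrow> bool" where
  "grassmannian_labelling P L f n \<longleftrightarrow> bij_betw f P (G2_points n) \<and>
     bij_betw (\<lambda>l. \<Union>(f ` l)) L (G2_lines n) \<and> (\<forall>p\<in>P. \<forall>l\<in>L. p \<in> l \<longleftrightarrow> f p \<subseteq> \<Union>(f ` l))"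

lemma inc_iso_grassmannian:
  "grassmannian_labelling P L f n \<Longrightarrow> inc_iso P L (\<in>) (G2_points n) (G2_lines n) (\<subseteq>)"
  unfolding grassmannian_labelling_def inc_iso_def by blast

lemma G2_points_filter: "G2_points n = Set.filter (\<lambda>s. card s = 2) (Pow {1..n})"
  and G2_lines_filter: "G2_lines n = Set.filter (\<lambda>s. card s = 3) (Pow {1..n})"
  by (auto simp: G2_points_def G2_lines_def)

section \<open>The structure D of defective triples of the sedenions\<close>

lemma sed_def_triples_eq:
  "sed_def_triples = {{3, 5, 6}, {3, 9, 10}, {3, 13, 14}, {5, 9, 12}, {5, 11, 14}, {6, 10, 12},
     {6, 11, 13}, {7, 9, 14}, {7, 10, 13}, {7, 11, 12}}"
  unfolding sed_def_triples_def defective_triple_def cd_triples_eq by code_simp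

lemma ordinary_triples_eq:
  "{t. ordinary_triple 4 t} = {{1, 2, 3}, {1, 4, 5}, {1, 6, 7}, {1, 8, 9}, {1, 10, 11}, {1, 12, 13},
     {1, 14, 15}, {2, 4, 6}, {2, 5, 7}, {2, 8, 10}, {2, 9, 11}, {2, 12, 14}, {2, 13, 15}, {3, 4, 7},
     {3, 8, 11}, {3, 12, 15}, {4, 8, 12}, {4, 9, 13}, {4, 10, 14}, {4, 11, 15}, {5, 8, 13},
     {5, 10, 15}, {6, 8, 14}, {6, 9, 15}, {7, 8, 15}}"
  unfolding ordinary_triple_def cd_triples_eq by code_simp

lemma on_defective_triple_iff: "(\<exists>t. defective_triple 4 t \<and> a \<in> t) \<longleftrightarrow> (\<exists>t\<in>sed_def_triples. a \<in> t)"
  by (auto simp: sed_def_triples_def)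

lemma D_points_eq: "D_points = {3, 5, 6, 7, 9, 10, 11, 12, 13, 14}"
proof -
  have "D_points = Set.filter (\<lambda>a. \<exists>t\<in>sed_def_triples. a \<in> t) {1..15}"
    by (auto simp: D_points_def on_defective_triple_iff)
  also have "\<dots> = {3, 5, 6, 7, 9, 10, 11, 12, 13, 14}"
    unfolding sed_def_triples_eq by code_simp
  finally show ?thesis .
qed

lemma units_off_defective_triples:
  "{a \<in> {1..15}. \<not> (\<exists>t. defective_triple 4 t \<and> a \<in> t)} = {1, 2, 4, 8, 15}"
  unfolding on_defective_triple_iff sed_def_triples_eq by code_simp

lemma triples_through_D_point:
  "\<forall>a \<in> {3, 5, 6, 7, 9, 10, 11, 12, 13, 14}.
     card {t. defective_triple 4 t \<and> a \<in> t} = 3 \<and> card {t. ordinary_triple 4 t \<and> a \<in> t} = 4"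
proof -
  have defective: "{t. defective_triple 4 t \<and> a \<in> t} = {t \<in> sed_def_triples. a \<in> t}"
    and ordinary: "{t. ordinary_triple 4 t \<and> a \<in> t} = {t \<in> {t. ordinary_triple 4 t}. a \<in> t}"
    for a :: nat by (auto simp: sed_def_triples_def)
  show ?thesis
    unfolding defective ordinary sed_def_triples_eq ordinary_triples_eq by code_simp
qed

lemma D_lines: "\<forall>l\<in>sed_def_triples. l \<subseteq> D_points \<and> card l = 3"
  unfolding sed_def_triples_eq D_points_eq by code_simp

definition D_hyperplanes :: "nat set set" where
  "D_hyperplanes = {{3, 5, 6, 7}, {3, 7, 11, 12}, {3, 9, 10, 11}, {3, 12, 13, 14}, {5, 7, 10, 13},
     {5, 9, 12, 13}, {5, 10, 11, 14}, {6, 7, 9, 14}, {6, 9, 11, 13}, {6, 10, 12, 14},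
     {3, 5, 6, 9, 10, 12}, {3, 5, 6, 11, 13, 14}, {3, 7, 9, 10, 13, 14}, {5, 7, 9, 11, 12, 14},
     {6, 7, 10, 11, 12, 13}}"

lemma D_hyperplane_determined_by_trace:
  assumes "H \<subseteq> D_points" "H' \<subseteq> D_points"
    and meets: "\<forall>l\<in>sed_def_triples. l \<subseteq> H \<or> card (l \<inter> H) = 1"
               "\<forall>l\<in>sed_def_triples. l \<subseteq> H' \<or> card (l \<inter> H') = 1"
    and trace: "H \<inter> {3, 5, 7, 9} = H' \<inter> {3, 5, 7, 9}"
  shows "H = H'"
proof -
  have line: "w \<in> X \<longleftrightarrow> (x \<in> X \<longleftrightarrow> y \<in> X)"
    if "{x, y, w} \<in> sed_def_triples" "x < y" "y < w" "X \<in> {H, H'}" for X x y w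
    using that meets three_point_line_condition_iff[of x y w X] by auto
  have spanning_lines: "{3, 5, 6} \<in> sed_def_triples" "{3, 9, 10} \<in> sed_def_triples"
    "{5, 9, 12} \<in> sed_def_triples" "{7, 9, 14} \<in> sed_def_triples" "{7, 10, 13} \<in> sed_def_triples"
    "{7, 11, 12} \<in> sed_def_triples"
    by (simp_all only: sed_def_triples_eq insert_iff simp_thms)
  have same: "p \<in> H \<longleftrightarrow> p \<in> H'" if "p \<in> {3, 5, 7, 9}" for p
    using trace that by blast
  have "6 \<in> H \<longleftrightarrow> 6 \<in> H'" using line[OF spanning_lines(1)] same[of 3] same[of 5] by simp
  moreover have "10 \<in> H \<longleftrightarrow> 10 \<in> H'" using line[OF spanning_lines(2)] same[of 3] same[of 9] by simp
  moreover have "12 \<in> H \<longleftrightarrow> 12 \<in> H'" using line[OF spanning_lines(3)] same[of 5] same[of 9] by simp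
  moreover have "14 \<in> H \<longleftrightarrow> 14 \<in> H'" using line[OF spanning_lines(4)] same[of 7] same[of 9] by simp
  moreover have "13 \<in> H \<longleftrightarrow> 13 \<in> H'"
    using line[OF spanning_lines(5)] same[of 7] \<open>10 \<in> H \<longleftrightarrow> 10 \<in> H'\<close> by simp
  moreover have "11 \<in> H \<longleftrightarrow> 11 \<in> H'"
    using line[OF spanning_lines(6)] same[of 7] \<open>12 \<in> H \<longleftrightarrow> 12 \<in> H'\<close> by simp blast
  ultimately have "\<forall>p\<in>D_points. p \<in> H \<longleftrightarrow> p \<in> H'"
    using same unfolding D_points_eq by auto
  with assms(1,2) show ?thesis by blast
qed

lemma hyperplanes_D_eq: "hyperplanes D_points sed_def_triples = D_hyperplanes"
proof (intro equalityI subsetI)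
  have listed: "\<forall>H\<in>D_hyperplanes. geom_hyperplane D_points sed_def_triples H"
    unfolding D_hyperplanes_def geom_hyperplane_def D_points_eq sed_def_triples_eq by code_simp
  then show "H \<in> hyperplanes D_points sed_def_triples" if "H \<in> D_hyperplanes" for H
    using that by (simp add: hyperplanes_def)
  fix H assume "H \<in> hyperplanes D_points sed_def_triples"
  then have H: "H \<subset> D_points" "\<forall>l\<in>sed_def_triples. l \<subseteq> H \<or> card (l \<inter> H) = 1"
    by (auto simp: hyperplanes_def geom_hyperplane_def)
  have "\<forall>S\<in>Pow {3, 5, 7, 9}. \<exists>H'\<in>insert D_points D_hyperplanes. H' \<inter> {3, 5, 7, 9} = S"
    unfolding D_points_eq D_hyperplanes_def by code_simp
  then have "\<exists>H'\<in>insert D_points D_hyperplanes. H' \<inter> {3, 5, 7, 9} = H \<inter> {3, 5, 7, 9}"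
    using PowI[OF Int_lower2] by (rule bspec)
  then obtain H' where H': "H' \<in> insert D_points D_hyperplanes" "H' \<inter> {3, 5, 7, 9} = H \<inter> {3, 5, 7, 9}"
    by (rule bexE)
  from H'(1) listed have "H' = D_points \<or> geom_hyperplane D_points sed_def_triples H'" by blast
  then have "H' \<subseteq> D_points" "\<forall>l\<in>sed_def_triples. l \<subseteq> H' \<or> card (l \<inter> H') = 1"
    using D_lines by (auto simp: geom_hyperplane_def)
  with H H'(2) have "H = H'"
    using D_hyperplane_determined_by_trace[of H H'] by (simp add: psubset_imp_subset)
  with H'(1) H(1) show "H \<in> D_hyperplanes" by blast
qed

lemma D_hyperplanes_antichain:
  "\<forall>H\<in>hyperplanes D_points sed_def_triples. \<forall>H'\<in>hyperplanes D_points sed_def_triples. H \<subseteq> H' \<longrightarrow> H = H'"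
  unfolding hyperplanes_D_eq D_hyperplanes_def by code_simp

abbreviation D_label :: "nat set \<Rightarrow> nat" where
  "D_label \<equiv> xor_label [3, 5, 6, 7, 9, 10, 11, 12, 13, 14]"

lemma D_labels:
  "D_label {3, 5, 6, 7} = 7" "D_label {3, 7, 11, 12} = 3" "D_label {3, 9, 10, 11} = 11"
  "D_label {3, 12, 13, 14} = 12" "D_label {5, 7, 10, 13} = 5" "D_label {5, 9, 12, 13} = 13"
  "D_label {5, 10, 11, 14} = 10" "D_label {6, 7, 9, 14} = 6" "D_label {6, 9, 11, 13} = 9"
  "D_label {6, 10, 12, 14} = 14" "D_label {3, 5, 6, 9, 10, 12} = 15" "D_label {3, 5, 6, 11, 13, 14} = 8"
  "D_label {3, 7, 9, 10, 13, 14} = 4" "D_label {5, 7, 9, 11, 12, 14} = 2" "D_label {6, 7, 10, 11, 12, 13} = 1"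
  unfolding xor_label_def by code_simp+

lemma bij_betw_D_label: "bij_betw D_label (hyperplanes D_points sed_def_triples) {1..15}"
  unfolding bij_betw_def inj_on_def hyperplanes_D_eq D_hyperplanes_def
  by (simp only: ball_simps D_labels image_insert image_empty) code_simp

lemma bij_betw_D_veldkamp_lines:
  "bij_betw (\<lambda>V. D_label ` V) (veldkamp_lines D_points sed_def_triples) {t. dist_triple 4 t}"
proof (rule bij_betw_veldkamp_lines_dist_triples[OF D_lines D_hyperplanes_antichain])
  have "{1..<2^4} = {1..15::nat}" by code_simp
  with bij_betw_D_label show "bij_betw D_label (hyperplanes D_points sed_def_triples) {1..<2^4}" by simp
  have D_list: "set [3, 5, 6, 7, 9, 10, 11, 12, 13, 14] = D_points" by (simp add: D_points_eq)
  show "D_label (veldkamp_third D_points A B) = D_label A XOR D_label B" for A B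
    using xor_label_veldkamp_third[of "[3, 5, 6, 7, 9, 10, 11, 12, 13, 14]" A B] unfolding D_list .
qed

lemma D_hyperplane_sizes:
  "\<forall>H\<in>hyperplanes D_points sed_def_triples.
     (card H = 4 \<longleftrightarrow> (\<exists>t\<in>sed_def_triples. D_label H \<in> t))
   \<and> (card H = 6 \<longleftrightarrow> D_label H \<in> {1, 2, 4, 8, 15})
   \<and> (card H = 4 \<longrightarrow>
        H = insert (D_label H) {q \<in> D_points. q \<noteq> D_label H \<and> \<not> collinear sed_def_triples (D_label H) q})"
  unfolding hyperplanes_D_eq
  unfolding D_hyperplanes_def collinear_def D_points_eq sed_def_triples_eq
  by (simp only: ball_simps D_labels) code_simp

definition desargues_label :: "nat \<Rightarrow> nat set" where
  "desargues_label p = (let S = Set.filter (\<lambda>i. bit p (i - 1)) {1..4} in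
     if card S = 2 then S else insert 5 ({1..4} - S))"

lemma desargues_labels:
  "desargues_label 3 = {1, 2}" "desargues_label 5 = {1, 3}" "desargues_label 6 = {2, 3}"
  "desargues_label 7 = {4, 5}" "desargues_label 9 = {1, 4}" "desargues_label 10 = {2, 4}"
  "desargues_label 11 = {3, 5}" "desargues_label 12 = {3, 4}" "desargues_label 13 = {2, 5}"
  "desargues_label 14 = {1, 5}"
  unfolding desargues_label_def by code_simp+

lemma D_grassmannian_labelling: "grassmannian_labelling D_points sed_def_triples desargues_label 5"
  unfolding grassmannian_labelling_def bij_betw_def inj_on_def G2_points_filter G2_lines_filter
    D_points_eq sed_def_triples_eq
  by (simp only: ball_simps desargues_labels image_insert image_empty Union_insert Union_empty)
    code_simp

text \<open>The six-point hyperplane H consists of the points of D whose Desargues label avoids k;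
  swapping k and 5 turns these labels into the points of G_2(4).\<close>

lemma pasch_labellings:
  "\<forall>(H, k) \<in> {({3, 5, 6, 9, 10, 12}, 5), ({3, 5, 6, 11, 13, 14}, 4), ({3, 7, 9, 10, 13, 14}, 3),
               ({5, 7, 9, 11, 12, 14}, 2), ({6, 7, 10, 11, 12, 13}, 1)}.
     grassmannian_labelling H (Set.filter (\<lambda>l. l \<subseteq> H) sed_def_triples)
       (\<lambda>p. transpose k 5 ` desargues_label p) 4"
proof -
  have G2_4: "G2_points 4 = {{1, 2}, {1, 3}, {1, 4}, {2, 3}, {2, 4}, {3, 4}}"
    "G2_lines 4 = {{1, 2, 3}, {1, 2, 4}, {1, 3, 4}, {2, 3, 4}}"
    unfolding G2_points_filter G2_lines_filter by code_simp+
  have lines_inside: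
    "Set.filter (\<lambda>l. l \<subseteq> {3, 5, 6, 9, 10, 12}) sed_def_triples = {{3, 5, 6}, {3, 9, 10}, {5, 9, 12}, {6, 10, 12}}"
    "Set.filter (\<lambda>l. l \<subseteq> {3, 5, 6, 11, 13, 14}) sed_def_triples = {{3, 5, 6}, {3, 13, 14}, {5, 11, 14}, {6, 11, 13}}"
    "Set.filter (\<lambda>l. l \<subseteq> {3, 7, 9, 10, 13, 14}) sed_def_triples = {{3, 9, 10}, {3, 13, 14}, {7, 9, 14}, {7, 10, 13}}"
    "Set.filter (\<lambda>l. l \<subseteq> {5, 7, 9, 11, 12, 14}) sed_def_triples = {{5, 9, 12}, {5, 11, 14}, {7, 9, 14}, {7, 11, 12}}"
    "Set.filter (\<lambda>l. l \<subseteq> {6, 7, 10, 11, 12, 13}) sed_def_triples = {{6, 10, 12}, {6, 11, 13}, {7, 10, 13}, {7, 11, 12}}"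
    unfolding sed_def_triples_eq by code_simp+
  show ?thesis
    unfolding grassmannian_labelling_def bij_betw_def inj_on_def G2_4 transpose_def
    by (simp only: ball_simps prod.case lines_inside desargues_labels image_insert image_empty
        UN_insert UN_empty) code_simp
qed

lemma six_point_D_hyperplane_pasch:
  assumes "H \<in> hyperplanes D_points sed_def_triples" "card H = 6"
  shows "inc_iso H {l \<in> sed_def_triples. l \<subseteq> H} (\<in>) (G2_points 4) (G2_lines 4) (\<subseteq>)"
proof -
  have "\<forall>H\<in>D_hyperplanes. card H = 6 \<longrightarrow> H \<in> {{3, 5, 6, 9, 10, 12}, {3, 5, 6, 11, 13, 14},
      {3, 7, 9, 10, 13, 14}, {5, 7, 9, 11, 12, 14}, {6, 7, 10, 11, 12, 13}}"
    unfolding D_hyperplanes_def by code_simp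
  with assms pasch_labellings show ?thesis
    unfolding hyperplanes_D_eq by (force intro: inc_iso_grassmannian)
qed

lemma D_hyperplane_properties:
  "\<forall>H \<in> hyperplanes D_points sed_def_triples.
     (card H = 4 \<longleftrightarrow> (\<exists>t. defective_triple 4 t \<and> D_label H \<in> t))
   \<and> (card H = 6 \<longleftrightarrow> D_label H \<in> {1, 2, 4, 8, 15})
   \<and> (card H = 4 \<longrightarrow> (\<exists>p\<in>H. H = insert p {q \<in> D_points. q \<noteq> p \<and> \<not> collinear sed_def_triples p q}))
   \<and> (card H = 6 \<longrightarrow> inc_iso H {l \<in> sed_def_triples. l \<subseteq> H} (\<in>) (G2_points 4) (G2_lines 4) (\<subseteq>))"
proof (intro ballI conjI impI)
  fix H assume H: "H \<in> hyperplanes D_points sed_def_triples"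
  note sizes = D_hyperplane_sizes[rule_format, OF H]
  show "card H = 4 \<longleftrightarrow> (\<exists>t. defective_triple 4 t \<and> D_label H \<in> t)"
    using sizes by (simp add: on_defective_triple_iff)
  show "card H = 6 \<longleftrightarrow> D_label H \<in> {1, 2, 4, 8, 15}" using sizes by blast
  show "\<exists>p\<in>H. H = insert p {q \<in> D_points. q \<noteq> p \<and> \<not> collinear sed_def_triples p q}"
    if "card H = 4" using sizes that by blast
  show "inc_iso H {l \<in> sed_def_triples. l \<subseteq> H} (\<in>) (G2_points 4) (G2_lines 4) (\<subseteq>)"
    if "card H = 6" using H that by (rule six_point_D_hyperplane_pasch)
qed

theorem mainTheorem2:
  shows
   "{a \<in> {1..15}. \<not> (\<exists>t. defective_triple 4 t \<and> a \<in> t)} = {1, 2, 4, 8, 15}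
    \<and> (\<forall>a \<in> {3, 5, 6, 7, 9, 10, 11, 12, 13, 14}.
          card {t. defective_triple 4 t \<and> a \<in> t} = 3 \<and>
          card {t. ordinary_triple 4 t \<and> a \<in> t} = 4)
    \<and> inc_iso D_points sed_def_triples (\<in>) (G2_points 5) (G2_lines 5) (\<subseteq>)
    \<and> (\<exists>\<phi>. bij_betw \<phi> (hyperplanes D_points sed_def_triples) {1..15}
         \<and> bij_betw (\<lambda>V. \<phi> ` V) (veldkamp_lines D_points sed_def_triples)
                   {t. dist_triple 4 t}
         \<and> (\<forall>H \<in> hyperplanes D_points sed_def_triples.
              (card H = 4 \<longleftrightarrow> (\<exists>t. defective_triple 4 t \<and> \<phi> H \<in> t))
            \<and> (card H = 6 \<longleftrightarrow> \<phi> H \<in> {1, 2, 4, 8, 15})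
            \<and> (card H = 4 \<longrightarrow> (\<exists>p\<in>H. H = insert p
                   {q \<in> D_points. q \<noteq> p \<and> \<not> collinear sed_def_triples p q}))
            \<and> (card H = 6 \<longrightarrow> inc_iso H {l \<in> sed_def_triples. l \<subseteq> H} (\<in>)
                   (G2_points 4) (G2_lines 4) (\<subseteq>))))"
  using units_off_defective_triples triples_through_D_point
    inc_iso_grassmannian[OF D_grassmannian_labelling]
    bij_betw_D_label bij_betw_D_veldkamp_lines D_hyperplane_properties
  by blast

end
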